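(* The Finsleroid Indicatrix $\{R\in V_N:K(g;R)=1\}$ meets the $Z$-axis $\{q=0\}$ in exactly two points, $Z_2(g)=e^{-G\pi/4}>0$ and $Z_1(g)=-e^{G\pi/4}<0$, and the altitude of the Finsleroid is $$Z_2(g)-Z_1(g)=2\cosh\frac{G\pi}{4}.$$
   Context: Let $N\ge2$, $V_N=\mathbb{R}^N$ with points $R=(R^1,\dots,R^N)$, $Z=R^N$; indices $a,b$ run over $1,\dots,N-1$, repeated indices summed. Fix a symmetric positive-definite matrix $(r_{ab})$, $q(R)=\sqrt{r_{ab}R^aR^b}$. Fix $g\in(-2,2)$, $h=\sqrt{1-g^2/4}$, $G=g/h$. Define $B(g;R)=Z^2+gqZ+q^2$, $A(g;R)=Z+\frac12gq$, $\Phi(g;R)=\arctan(A/(hq))$ for $q>0$ ($\Phi=\pi/2$ if $q=0,Z>0$; $\Phi=-\pi/2$ if $q=0,Z<0$), $J=e^{\frac12G\Phi}$, and the Finsleroid metric function $K(g;R)=\sqrt{B}\,J$ ($K(g;0)=0$). *)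

theory Defs
  imports "HOL-Analysis.Analysis"
begin

text \<open>A point R of V_N = R^N is represented as a pair (x, Z), where
  x :: real^'m collects the coordinates R^1..R^(N-1) (so N - 1 = CARD('m) \<ge> 1,
  i.e. N \<ge> 2) and Z = R^N.\<close>

definition sym_posdef :: "real^'m^'m \<Rightarrow> bool" where
  "sym_posdef r \<longleftrightarrow> transpose r = r \<and> (\<forall>x. x \<noteq> 0 \<longrightarrow> x \<bullet> (r *v x) > 0)"

definition fq :: "real^'m^'m \<Rightarrow> real^'m \<Rightarrow> real" where
  "fq r x = sqrt (x \<bullet> (r *v x))"

definition fh :: "real \<Rightarrow> real" where
  "fh g = sqrt (1 - g^2/4)"

definition fG :: "real \<Rightarrow> real" where
  "fG g = g / fh g"

definition fB :: "real \<Rightarrow> real^'m^'m \<Rightarrow> (real^'m) \<times> real \<Rightarrow> real" where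
  "fB g r R = (snd R)^2 + g * fq r (fst R) * snd R + (fq r (fst R))^2"

definition fA :: "real \<Rightarrow> real^'m^'m \<Rightarrow> (real^'m) \<times> real \<Rightarrow> real" where
  "fA g r R = snd R + g * fq r (fst R) / 2"

definition fPhi :: "real \<Rightarrow> real^'m^'m \<Rightarrow> (real^'m) \<times> real \<Rightarrow> real" where
  "fPhi g r R =
     (if fq r (fst R) > 0 then arctan (fA g r R / (fh g * fq r (fst R)))
      else if snd R > 0 then pi/2 else - pi/2)"

definition fJ :: "real \<Rightarrow> real^'m^'m \<Rightarrow> (real^'m) \<times> real \<Rightarrow> real" where
  "fJ g r R = exp (fG g * fPhi g r R / 2)"

definition fK :: "real \<Rightarrow> real^'m^'m \<Rightarrow> (real^'m) \<times> real \<Rightarrow> real" where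
  "fK g r R = (if R = 0 then 0 else sqrt (fB g r R) * fJ g r R)"

end

theory Submission
  imports Defs
begin

text \<open>On the Z-axis q vanishes, so B = Z^2 and the angle \<Phi> is \<plusminus>\<pi>/2; hence
  K(g;(0,Z)) = |Z| e^(\<plusminus>G\<pi>/4), which equals 1 exactly at Z = e^(-G\<pi>/4) and
  Z = -e^(G\<pi>/4).
  Positive definiteness of r is what makes {q = 0} the Z-axis.\<close>

lemma fq_eq_0_iff:
  assumes "sym_posdef r"
  shows "fq r x = 0 \<longleftrightarrow> x = 0"
proof
  assume q: "fq r x = 0"
  show "x = 0"
  proof (rule ccontr)
    assume "x \<noteq> 0"
    then have "x \<bullet> (r *v x) > 0" using assms by (simp add: sym_posdef_def)
    then show False using q by (simp add: fq_def)
  qed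
qed (simp add: fq_def)

lemma fK_on_axis:
  "fK g r (0, z) =
     (if z = 0 then 0 else if z > 0 then z * exp (fG g * pi / 4) else - z * exp (- fG g * pi / 4))"
  by (auto simp: fK_def fB_def fJ_def fPhi_def fq_def zero_prod_def)

lemma fK_on_axis_eq_1_iff:
  "fK g r (0, z) = 1 \<longleftrightarrow> z = exp (- fG g * pi / 4) \<or> z = - exp (fG g * pi / 4)"
proof -
  have "z * exp (fG g * pi / 4) = 1 \<longleftrightarrow> z = exp (- fG g * pi / 4)"
    by (simp add: exp_minus field_simps)
  moreover have "- z * exp (- fG g * pi / 4) = 1 \<longleftrightarrow> z = - exp (fG g * pi / 4)"
    by (simp add: exp_minus field_simps)
  ultimately show ?thesis
    by (auto simp: fK_on_axis)
qed

theorem theorem2p8: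
  fixes g :: real and r :: "real^'m^'m"
  assumes "sym_posdef r" and "-2 < g" and "g < 2"
  shows "{R :: (real^'m) \<times> real. fK g r R = 1 \<and> fq r (fst R) = 0}
           = {(0, exp (- fG g * pi / 4)), (0, - exp (fG g * pi / 4))}
         \<and> exp (- fG g * pi / 4) > 0 \<and> - exp (fG g * pi / 4) < 0
         \<and> exp (- fG g * pi / 4) - (- exp (fG g * pi / 4)) = 2 * cosh (fG g * pi / 4)"
proof -
  have "{R :: (real^'m) \<times> real. fK g r R = 1 \<and> fq r (fst R) = 0}
          = {(0, exp (- fG g * pi / 4)), (0, - exp (fG g * pi / 4))}"
    using fK_on_axis_eq_1_iff fq_eq_0_iff[OF assms(1)] by (auto simp: fq_def)
  moreover have "exp (- fG g * pi / 4) - (- exp (fG g * pi / 4)) = 2 * cosh (fG g * pi / 4)"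
    by (simp add: cosh_def)
  ultimately show ?thesis
    by simp
qed

end
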